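(* Let $N$ be a set of $n$ elements and $v:2^N\to\mathbb{R}_+$ a function with $v(\emptyset)=0$. Consider the randomized procedure: pick a size $k\in\{1,\dots,n\}$ with probability $(k\cdot H_n)^{-1}$, where $H_n=\sum_{j=1}^n\frac1j$, and then pick a uniformly random set $S\subseteq N$ of size $k$. Then $$\mathbb{E}\Big[\sum_{i\in S}v(\{i\}\mid S\setminus\{i\})\Big]=\frac{1}{H_n}v(N).$$
   Context: Marginal value: $v(\{i\}\mid T)=v(T\cup\{i\})-v(T)$. *)

theory Defs
  imports "HOL-Analysis.Analysis"
begin

definition marginal :: "('a set \<Rightarrow> real) \<Rightarrow> 'a \<Rightarrow> 'a set \<Rightarrow> real" where
  "marginal v i T = v (T \<union> {i}) - v T"

definition expected_marginal_sum :: "'a set \<Rightarrow> ('a set \<Rightarrow> real) \<Rightarrow> real" where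
  "expected_marginal_sum N v =
     (let n = card N in
      \<Sum>k=1..n. (1 / (real k * (harm n :: real))) *
        (\<Sum>S\<in>{S. S \<subseteq> N \<and> card S = k}.
           (1 / real (n choose k)) * (\<Sum>i\<in>S. marginal v i (S - {i}))))"

end

theory Submission
  imports Defs
begin

text \<open>Let \<open>a k\<close> be the average of \<open>v\<close> over the \<open>k\<close>-subsets of \<open>N\<close>. Double counting the pairs
  \<open>(S, i)\<close> with \<open>i \<in> S\<close> shows that the average over \<open>k\<close>-subsets \<open>S\<close> of
  \<open>\<Sum>i\<in>S. v({i} | S - {i})\<close> equals \<open>k (a k - a (k - 1))\<close>. The weight \<open>1/(k H\<^sub>n)\<close> cancels the
  factor \<open>k\<close>, so the expectation telescopes to \<open>(a n - a 0) / H\<^sub>n = v N / H\<^sub>n\<close>.\<close>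

definition subset_average :: "'a set \<Rightarrow> ('a set \<Rightarrow> real) \<Rightarrow> nat \<Rightarrow> real" where
  "subset_average N v k =
     (\<Sum>S\<in>{S. S \<subseteq> N \<and> card S = k}. v S) / real (card N choose k)"

lemma subset_average_card:
  assumes "finite N"
  shows "subset_average N v (card N) = v N"
proof -
  have "{S. S \<subseteq> N \<and> card S = card N} = {N}"
    using assms card_subset_eq by auto
  then show ?thesis by (simp add: subset_average_def)
qed

lemma subset_average_0:
  assumes "finite N"
  shows "subset_average N v 0 = v {}"
proof -
  have "{S. S \<subseteq> N \<and> card S = 0} = {{}}"
    using assms by (auto dest: finite_subset)
  then show ?thesis by (simp add: subset_average_def)
qed

lemma sum_over_subsets_remove_one:
  fixes g :: "'a set \<Rightarrow> 'b::comm_semiring_1"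
  assumes "finite N"
  shows "(\<Sum>S\<in>{S. S \<subseteq> N \<and> card S = Suc j}. \<Sum>i\<in>S. g (S - {i}))
       = of_nat (card N - j) * (\<Sum>T\<in>{T. T \<subseteq> N \<and> card T = j}. g T)"
proof -
  let ?A = "{S. S \<subseteq> N \<and> card S = Suc j}"
  let ?B = "{T. T \<subseteq> N \<and> card T = j}"
  have fin_subsets: "finite {S. S \<subseteq> N \<and> P S}" for P
    using assms by (auto intro: finite_subset[of _ "Pow N"])
  have fin_member: "S \<subseteq> N \<Longrightarrow> finite S" for S
    using assms finite_subset by blast
  have "(\<Sum>S\<in>?A. \<Sum>i\<in>S. g (S - {i})) = (\<Sum>(S, i)\<in>Sigma ?A (\<lambda>S. S). g (S - {i}))"
    using fin_subsets fin_member by (subst sum.Sigma) auto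
  also have "\<dots> = (\<Sum>(T, i)\<in>Sigma ?B (\<lambda>T. N - T). g T)"
    by (rule sum.reindex_bij_witness[where i = "\<lambda>(T, i). (insert i T, i)"
                                      and j = "\<lambda>(S, i). (S - {i}, i)"])
       (auto simp: fin_member card_insert_if card_Diff_singleton)
  also have "\<dots> = (\<Sum>T\<in>?B. of_nat (card (N - T)) * g T)"
    using fin_subsets assms by (subst sum.Sigma[symmetric]) auto
  also have "\<dots> = (\<Sum>T\<in>?B. of_nat (card N - j) * g T)"
    by (rule sum.cong) (auto simp: card_Diff_subset fin_member)
  finally show ?thesis by (simp add: sum_distrib_left)
qed

lemma sum_marginal_remove_one:
  assumes "finite S"
  shows "(\<Sum>i\<in>S. marginal v i (S - {i})) = real (card S) * v S - (\<Sum>i\<in>S. v (S - {i}))"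
proof -
  have "(\<Sum>i\<in>S. marginal v i (S - {i})) = (\<Sum>i\<in>S. v S - v (S - {i}))"
    by (rule sum.cong) (auto simp: marginal_def insert_absorb)
  then show ?thesis by (simp add: sum_subtractf)
qed

lemma average_sum_marginal_over_subsets:
  assumes "finite N" and "j < card N"
  shows "(\<Sum>S\<in>{S. S \<subseteq> N \<and> card S = Suc j}. \<Sum>i\<in>S. marginal v i (S - {i}))
           / (real (Suc j) * real (card N choose Suc j))
       = subset_average N v (Suc j) - subset_average N v j"
proof -
  define n where "n = card N"
  have marginals: "(\<Sum>S\<in>{S. S \<subseteq> N \<and> card S = Suc j}. \<Sum>i\<in>S. marginal v i (S - {i}))
      = real (Suc j) * (\<Sum>S\<in>{S. S \<subseteq> N \<and> card S = Suc j}. v S)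
        - real (n - j) * (\<Sum>T\<in>{T. T \<subseteq> N \<and> card T = j}. v T)"
  proof -
    have "(\<Sum>S\<in>{S. S \<subseteq> N \<and> card S = Suc j}. \<Sum>i\<in>S. marginal v i (S - {i}))
        = (\<Sum>S\<in>{S. S \<subseteq> N \<and> card S = Suc j}. real (Suc j) * v S - (\<Sum>i\<in>S. v (S - {i})))"
      using assms(1) by (intro sum.cong) (auto simp: sum_marginal_remove_one finite_subset)
    then show ?thesis
      using sum_over_subsets_remove_one[OF assms(1), where j = j and g = v]
      by (simp add: sum_subtractf sum_distrib_left n_def)
  qed
  have "real (Suc j) * real (n choose Suc j) = real (n - j) * real (n choose j)"
    by (metis binomial_absorption binomial_absorb_comp of_nat_mult)
  moreover have "real (n choose Suc j) \<noteq> 0" "real (n choose j) \<noteq> 0" "real (n - j) \<noteq> 0"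
    using assms(2) by (auto simp: n_def)
  moreover have "(k * A1 - m * A0) / (k * C1) = A1 / C1 - A0 / C0"
    if "k * C1 = m * C0" "k \<noteq> 0" "m \<noteq> 0" "C1 \<noteq> 0" "C0 \<noteq> 0" for k m A1 A0 C1 C0 :: real
    using that by (simp add: diff_divide_distrib) (metis mult.commute nonzero_mult_divide_mult_cancel_left)
  ultimately show ?thesis
    unfolding marginals subset_average_def n_def[symmetric] by simp
qed

theorem mainTheorem16:
  fixes N :: "'a set" and v :: "'a set \<Rightarrow> real"
  assumes "finite N" and "card N \<ge> 1"
    and "\<And>S. S \<subseteq> N \<Longrightarrow> v S \<ge> 0"
    and "v {} = 0"
  shows "expected_marginal_sum N v = v N / (harm (card N) :: real)"
proof -
  define n where "n = card N"
  define a where "a = subset_average N v"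
  define term_k where "term_k k = (1 / (real k * harm n)) *
      (\<Sum>S\<in>{S. S \<subseteq> N \<and> card S = k}. (1 / real (n choose k)) * (\<Sum>i\<in>S. marginal v i (S - {i})))"
    for k
  have "expected_marginal_sum N v = (\<Sum>k=1..n. term_k k)"
    by (simp add: expected_marginal_sum_def term_k_def n_def Let_def)
  also have "\<dots> = (\<Sum>j<n. term_k (Suc j))"
    by (simp add: sum.atLeast1_atMost_eq)
  also have "\<dots> = (\<Sum>j<n. (a (Suc j) - a j) / harm n)"
  proof (rule sum.cong)
    fix j assume "j \<in> {..<n}"
    then have "j < card N" by (simp add: n_def)
    have "term_k (Suc j) = (\<Sum>S\<in>{S. S \<subseteq> N \<and> card S = Suc j}. \<Sum>i\<in>S. marginal v i (S - {i}))
        / (real (Suc j) * real (n choose Suc j)) / harm n"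
      by (simp add: term_k_def sum_divide_distrib[symmetric] divide_divide_eq_left mult_ac)
    also have "\<dots> = (a (Suc j) - a j) / harm n"
      by (simp only: a_def n_def average_sum_marginal_over_subsets[OF assms(1) \<open>j < card N\<close>])
    finally show "term_k (Suc j) = (a (Suc j) - a j) / harm n" .
  qed simp
  also have "\<dots> = (a n - a 0) / harm n"
    by (simp add: sum_divide_distrib[symmetric] sum_lessThan_telescope)
  finally show ?thesis
    using assms by (simp add: a_def n_def subset_average_card subset_average_0)
qed

end
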